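(* Let $p/q$ (with $p,q$ coprime positive integers) be a convergent of the simple continued fraction expansion of $e$. (i) If $q>1$ and $S(q)$ denotes the smallest positive integer such that $q$ divides $S(q)!$, then $q^2 < (S(q)+1)!$. (ii) If $n>0$ is an integer and $n! = dq$ for some integer $d$ (i.e. $n!$ is a multiple of $q$), then $d^2 > \dfrac{n!}{n+1}$.
   Context: The convergents of $e$ are the rationals $p_k/q_k$ (in lowest terms, $q_k>0$) obtained by truncating the simple continued fraction expansion of $e$; they begin $2/1, 3/1, 8/3, 11/4, 19/7, 87/32,\dots$. *)

theory Defs
  imports Complex_Main
begin

primrec cf_rem :: "real \<Rightarrow> nat \<Rightarrow> real" where
  "cf_rem x 0 = x"
| "cf_rem x (Suc n) = 1 / (cf_rem x n - of_int \<lfloor>cf_rem x n\<rfloor>)"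

definition cf_coeff :: "real \<Rightarrow> nat \<Rightarrow> int" where
  "cf_coeff x n = \<lfloor>cf_rem x n\<rfloor>"

primrec cf_eval :: "nat \<Rightarrow> (nat \<Rightarrow> int) \<Rightarrow> real" where
  "cf_eval 0 a = of_int (a 0)"
| "cf_eval (Suc n) a = of_int (a 0) + 1 / cf_eval n (\<lambda>i. a (Suc i))"

definition convergent_of :: "real \<Rightarrow> nat \<Rightarrow> real" where
  "convergent_of x k = cf_eval k (cf_coeff x)"

definition smarandache :: "nat \<Rightarrow> nat" where
  "smarandache q = (LEAST m. 0 < m \<and> q dvd fact m)"

end

theory Submission
  imports Defs
begin

text \<open>If q is the denominator of a convergent p/q of the irrational number e, then
  |q e - p| < 1/q. On the other hand, for n \<ge> 2 the number n! e exceeds the integer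
  \<Sum>i\<le>n. n!/i! by the remainder \<Sum>i>n. n!/i!, which lies in (1/(n+1), 1/n], so n! e is
  farther than 1/(n+1) from every integer. If n! = d q, then n! e is within d |q e - p| < d/q
  of the integer d p, hence 1/(n+1) < d/q, i.e. d^2 > n!/(n+1). Taking n = S(q) and
  multiplying d^2 (S(q)+1) > S(q)! by q^2 gives q^2 < (S(q)+1)!.\<close>

text \<open>cf_num k a / cf_den k a is the convergent [a 0; ..., a k] and cf_num_prev k a / cf_den_prev k a
  the preceding one, taken to be 1/0 for k = 0. The recursions peel off a 0, as cf_eval does.\<close>
fun cf_num :: "nat \<Rightarrow> (nat \<Rightarrow> int) \<Rightarrow> int"
  and cf_den :: "nat \<Rightarrow> (nat \<Rightarrow> int) \<Rightarrow> int" where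
  "cf_num 0 a = a 0"
| "cf_num (Suc k) a = a 0 * cf_num k (\<lambda>i. a (Suc i)) + cf_den k (\<lambda>i. a (Suc i))"
| "cf_den 0 a = 1"
| "cf_den (Suc k) a = cf_num k (\<lambda>i. a (Suc i))"

fun cf_num_prev :: "nat \<Rightarrow> (nat \<Rightarrow> int) \<Rightarrow> int"
  and cf_den_prev :: "nat \<Rightarrow> (nat \<Rightarrow> int) \<Rightarrow> int" where
  "cf_num_prev 0 a = 1"
| "cf_num_prev (Suc k) a = a 0 * cf_num_prev k (\<lambda>i. a (Suc i)) + cf_den_prev k (\<lambda>i. a (Suc i))"
| "cf_den_prev 0 a = 0"
| "cf_den_prev (Suc k) a = cf_num_prev k (\<lambda>i. a (Suc i))"

primrec cf_eval_tail :: "nat \<Rightarrow> (nat \<Rightarrow> int) \<Rightarrow> real \<Rightarrow> real" where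
  "cf_eval_tail 0 a t = of_int (a 0) + 1 / t"
| "cf_eval_tail (Suc k) a t = of_int (a 0) + 1 / cf_eval_tail k (\<lambda>i. a (Suc i)) t"

lemma cf_det: "cf_num k a * cf_den_prev k a - cf_num_prev k a * cf_den k a = (-1) ^ Suc k"
proof (induction k arbitrary: a)
  case (Suc k)
  from Suc.IH[of "\<lambda>i. a (Suc i)"] show ?case by (simp add: algebra_simps)
qed simp

lemma coprime_cf_num_cf_den: "coprime (cf_num k a) (cf_den k a)"
proof (rule coprimeI)
  fix c assume "c dvd cf_num k a" "c dvd cf_den k a"
  then have "c dvd (-1) ^ Suc k"
    unfolding cf_det[of k a, symmetric] by (simp add: dvd_diff)
  moreover have "is_unit ((-1 :: int) ^ Suc k)" by simp
  ultimately show "is_unit c" by (rule dvd_unit_imp_unit)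
qed

lemma cf_num_den_pos:
  assumes "\<And>i. 0 < a i"
  shows "0 < cf_num k a \<and> 0 < cf_den k a \<and> 0 < cf_num_prev k a \<and> 0 \<le> cf_den_prev k a"
  using assms
proof (induction k arbitrary: a)
  case (Suc k)
  from Suc.IH[of "\<lambda>i. a (Suc i)"] Suc.prems[of 0] Suc.prems show ?case
    by (simp add: add_pos_pos add_pos_nonneg)
qed simp

text \<open>The denominators do not depend on a 0, so its sign is irrelevant for them.\<close>
lemma cf_den_pos:
  assumes "\<And>i. 0 < a (Suc i)"
  shows "0 < cf_den k a \<and> 0 \<le> cf_den_prev k a"
proof (cases k)
  case (Suc j)
  from cf_num_den_pos[of "\<lambda>i. a (Suc i)" j] assms show ?thesis by (simp add: Suc)
qed simp

lemma cf_eval_eq_num_den: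
  assumes "\<And>i. 0 < a (Suc i)"
  shows "cf_eval k a = cf_num k a / cf_den k a"
  using assms
proof (induction k arbitrary: a)
  case (Suc k)
  have "0 < cf_num k (\<lambda>i. a (Suc i))" using cf_num_den_pos[of "\<lambda>i. a (Suc i)"] Suc.prems by blast
  with Suc.IH[of "\<lambda>i. a (Suc i)"] Suc.prems show ?case by (simp add: field_simps)
qed simp

lemma cf_eval_tail_eq:
  fixes t :: real
  assumes "\<And>i. 0 < a (Suc i)" and "0 < t"
  shows "cf_eval_tail k a t
    = (cf_num k a * t + cf_num_prev k a) / (cf_den k a * t + cf_den_prev k a)"
  using assms(1)
proof (induction k arbitrary: a)
  case 0
  with \<open>0 < t\<close> show ?case by (simp add: field_simps)
next
  case (Suc k)
  let ?b = "\<lambda>i. a (Suc i)"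
  have "0 < cf_num k ?b" "0 < cf_num_prev k ?b"
    using cf_num_den_pos[of ?b] Suc.prems by auto
  with \<open>0 < t\<close> have "0 < cf_num k ?b * t + cf_num_prev k ?b"
    by (simp add: add_pos_pos)
  with Suc.IH[of ?b] Suc.prems show ?case by (simp add: field_simps)
qed

lemma cf_rem_Suc': "cf_rem x (Suc n) = cf_rem (cf_rem x 1) n"
  by (induction n) auto

lemma cf_rem_not_rational: "x \<notin> \<rat> \<Longrightarrow> cf_rem x n \<notin> \<rat>"
proof (induction n)
  case (Suc n)
  show ?case
  proof
    let ?r = "cf_rem x n"
    assume "cf_rem x (Suc n) \<in> \<rat>"
    have "?r = of_int \<lfloor>?r\<rfloor> + 1 / cf_rem x (Suc n)" by simp
    also have "\<dots> \<in> \<rat>" using \<open>cf_rem x (Suc n) \<in> \<rat>\<close> by (intro Rats_add Rats_divide) auto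
    finally show False using Suc by simp
  qed
qed simp

lemma cf_rem_Suc_gt_1:
  assumes "x \<notin> \<rat>"
  shows "1 < cf_rem x (Suc n)"
proof -
  let ?r = "cf_rem x n"
  have "?r \<noteq> of_int \<lfloor>?r\<rfloor>" using cf_rem_not_rational[OF assms] by (metis Rats_of_int)
  then have "0 < ?r - of_int \<lfloor>?r\<rfloor>" "?r - of_int \<lfloor>?r\<rfloor> < 1"
    using of_int_floor_le[of ?r] floor_correct[of ?r] by linarith+
  then show ?thesis by simp
qed

lemma cf_coeff_Suc_pos: "x \<notin> \<rat> \<Longrightarrow> 0 < cf_coeff x (Suc n)"
  using cf_rem_Suc_gt_1[of x n] by (simp add: cf_coeff_def)

lemma cf_eval_tail_cf_rem:
  assumes "x \<notin> \<rat>"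
  shows "cf_eval_tail k (cf_coeff x) (cf_rem x (Suc k)) = x"
  using assms
proof (induction k arbitrary: x)
  case 0
  then have "x \<noteq> of_int \<lfloor>x\<rfloor>" by (metis Rats_of_int)
  then show ?case by (simp add: cf_coeff_def)
next
  case (Suc k)
  let ?y = "cf_rem x 1"
  have "(\<lambda>i. cf_coeff x (Suc i)) = cf_coeff ?y"
    by (rule ext) (simp only: cf_coeff_def cf_rem_Suc')
  moreover have "cf_rem x (Suc (Suc k)) = cf_rem ?y (Suc k)" by (rule cf_rem_Suc')
  moreover have "cf_eval_tail k (cf_coeff ?y) (cf_rem ?y (Suc k)) = ?y"
    using Suc.IH cf_rem_not_rational[OF Suc.prems] by blast
  moreover have "x \<noteq> of_int \<lfloor>x\<rfloor>" using Suc.prems by (metis Rats_of_int)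
  ultimately show ?case by (simp add: cf_coeff_def)
qed

text \<open>With t > 1 the complete quotient, the error of the k-th convergent is
  1 / (Q (Q t + Q')), by the determinant identity.\<close>
lemma convergent_of_error:
  assumes "x \<notin> \<rat>"
  shows "\<bar>x - convergent_of x k\<bar> < 1 / cf_den k (cf_coeff x) ^ 2"
proof -
  let ?a = "cf_coeff x"
  define P Q P' Q' where "P = cf_num k ?a" and "Q = cf_den k ?a"
    and "P' = cf_num_prev k ?a" and "Q' = cf_den_prev k ?a"
  define t where "t = cf_rem x (Suc k)"
  have pos: "0 < ?a (Suc i)" for i using cf_coeff_Suc_pos[OF assms] .
  have "0 < Q" "0 \<le> Q'" using cf_den_pos[of ?a k] pos by (auto simp: Q_def Q'_def)
  have "1 < t" unfolding t_def by (rule cf_rem_Suc_gt_1[OF assms])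
  then have "real_of_int Q * 1 < Q * t" using \<open>0 < Q\<close> by (intro mult_strict_left_mono) auto
  then have "Q < Q * t + Q'" using \<open>0 \<le> Q'\<close> by simp
  have "x = cf_eval_tail k ?a t"
    unfolding t_def by (rule cf_eval_tail_cf_rem[OF assms, symmetric])
  also have "\<dots> = (P * t + P') / (Q * t + Q')"
    unfolding P_def Q_def P'_def Q'_def using pos \<open>1 < t\<close> by (simp add: cf_eval_tail_eq)
  finally have x_eq: "x = (P * t + P') / (Q * t + Q')" .
  have "convergent_of x k = P / Q"
    using cf_eval_eq_num_den[of ?a, OF pos] by (simp add: convergent_of_def P_def Q_def)
  then have "x - convergent_of x k = (P * t + P') / (Q * t + Q') - P / Q"
    by (subst x_eq) simp
  also have "\<dots> = of_int (P' * Q - P * Q') / (Q * (Q * t + Q'))"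
    using \<open>0 < Q\<close> \<open>Q < Q * t + Q'\<close> by (simp add: field_simps)
  finally have error_eq: "x - convergent_of x k = of_int (P' * Q - P * Q') / (Q * (Q * t + Q'))" .
  have "\<bar>P' * Q - P * Q'\<bar> = 1"
    using cf_det[of k ?a] by (simp add: P_def Q_def P'_def Q'_def abs_minus_commute)
  then have "\<bar>x - convergent_of x k\<bar> = 1 / (Q * (Q * t + Q'))"
    unfolding error_eq abs_divide of_int_abs[symmetric]
    using \<open>0 < Q\<close> \<open>Q < Q * t + Q'\<close> by simp
  also have "\<dots> < 1 / (Q * Q)"
    using \<open>0 < Q\<close> \<open>Q < Q * t + Q'\<close> by (intro divide_strict_left_mono mult_strict_left_mono) auto
  finally show ?thesis by (simp add: Q_def power2_eq_square)
qed

lemma convergent_of_reduced_error: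
  fixes p q :: int and x :: real
  assumes "x \<notin> \<rat>" and "0 < q" and "coprime p q"
    and "of_int p / of_int q = convergent_of x k"
  shows "\<bar>q * x - p\<bar> < 1 / q"
proof -
  let ?a = "cf_coeff x"
  define P Q where "P = cf_num k ?a" and "Q = cf_den k ?a"
  have pos: "0 < ?a (Suc i)" for i using cf_coeff_Suc_pos[OF assms(1)] .
  have "0 < Q" using cf_den_pos[of ?a k] pos by (simp add: Q_def)
  have "convergent_of x k = P / Q"
    using cf_eval_eq_num_den[of ?a, OF pos] by (simp add: convergent_of_def P_def Q_def)
  with assms(4) \<open>0 < q\<close> \<open>0 < Q\<close> have "p * Q = q * P"
    by (simp add: field_simps flip: of_int_mult)
  moreover have "coprime P Q" unfolding P_def Q_def by (rule coprime_cf_num_cf_den)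
  ultimately have "q = Q"
    using coprime_crossproduct'[of q Q p P] assms(2,3) \<open>0 < Q\<close> by simp
  then have "\<bar>x - p / q\<bar> < 1 / q ^ 2"
    using convergent_of_error[OF assms(1), of k] assms(4) by (simp add: Q_def)
  then have "q * \<bar>x - p / q\<bar> < q * (1 / q ^ 2)"
    using \<open>0 < q\<close> by (intro mult_strict_left_mono) auto
  then show ?thesis
    using \<open>0 < q\<close> by (simp add: power2_eq_square field_simps flip: abs_mult)
qed

lemma power_mult_fact_le_fact: "(real n + 1) ^ j * fact n \<le> fact (n + j)"
proof (induction j)
  case (Suc j)
  have "(real n + 1) ^ Suc j * fact n = (real n + 1) * ((real n + 1) ^ j * fact n)"
    by simp
  also have "\<dots> \<le> (real (n + j) + 1) * ((real n + 1) ^ j * fact n)"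
    by (intro mult_right_mono) auto
  also have "\<dots> \<le> (real (n + j) + 1) * fact (n + j)"
    using Suc.IH by (intro mult_left_mono) auto
  finally show ?case by (simp add: algebra_simps)
qed simp

text \<open>The sum over i \<le> n of n!/i! is an integer, so this series is what separates n! e
  from the integers.\<close>
lemma exp_1_remainder_sums:
  "(\<lambda>i. fact n / fact (n + 1 + i)) sums (fact n * exp 1 - real (\<Sum>i\<le>n. fact n div fact i))"
proof -
  have "(\<lambda>i. 1 / fact i) sums (exp 1 :: real)"
    using exp_converges[of "1::real"] by (simp add: divide_inverse)
  then have "(\<lambda>i. fact n * (1 / fact (i + Suc n))) sums (fact n * (exp 1 - (\<Sum>i<Suc n. 1 / fact i :: real)))"
    by (intro sums_mult sums_split_initial_segment)
  moreover have "fact n * (\<Sum>i<Suc n. 1 / fact i) = real (\<Sum>i\<le>n. fact n div fact i)"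
    unfolding sum_distrib_left lessThan_Suc_atMost of_nat_sum
    by (intro sum.cong) (simp_all add: real_of_nat_div fact_dvd)
  ultimately show ?thesis by (simp add: algebra_simps)
qed

lemma exp_1_remainder_bounds:
  assumes "0 < n"
  defines "R \<equiv> fact n * exp 1 - real (\<Sum>i\<le>n. fact n div fact i)"
  shows "1 / (real n + 1) < R" and "R \<le> 1 / real n"
proof -
  let ?g = "\<lambda>i. fact n / fact (n + 1 + i) :: real"
  let ?h = "\<lambda>i. 1 / (real n + 1) * (1 / (real n + 1)) ^ i"
  have g: "?g sums R" unfolding R_def by (rule exp_1_remainder_sums)
  have "sum ?g {..<1} < suminf ?g"
    using g by (intro sum_less_suminf) (auto simp: sums_iff)
  then show "1 / (real n + 1) < R"
    unfolding sums_unique[OF g, symmetric] by (simp add: add.commute)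
  have "?g i \<le> ?h i" for i
  proof -
    have "?g i \<le> fact n / ((real n + 1) ^ Suc i * fact n)"
      using power_mult_fact_le_fact[of n "Suc i"] by (intro divide_left_mono) auto
    then show ?thesis by (simp add: power_divide)
  qed
  moreover have "?h sums (1 / (real n + 1) * (1 / (1 - 1 / (real n + 1))))"
    by (rule sums_mult, rule geometric_sums) (use assms in simp)
  ultimately have "R \<le> 1 / (real n + 1) * (1 / (1 - 1 / (real n + 1)))"
    by (rule sums_le[OF _ g])
  also have "\<dots> = 1 / real n" using assms by (simp add: field_simps)
  finally show "R \<le> 1 / real n" .
qed

lemma fact_mult_exp_1_dist_int:
  assumes "2 \<le> n"
  shows "1 / (real n + 1) < \<bar>fact n * exp 1 - of_int m\<bar>"
proof -
  define N where "N = (\<Sum>i\<le>n. fact n div fact i :: nat)"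
  define R where "R = fact n * exp 1 - real N"
  have R: "1 / (real n + 1) < R" "R \<le> 1 / real n"
    using exp_1_remainder_bounds[of n] assms unfolding R_def N_def by simp_all
  have "1 / real n \<le> 1 / 2" "1 / (real n + 1) \<le> 1 / 3"
    using assms by (simp_all add: field_simps)
  show ?thesis
  proof (cases "m \<le> int N")
    case True
    then have "real_of_int m \<le> real N" by linarith
    with R show ?thesis by (simp add: R_def)
  next
    case False
    then have "real N + 1 \<le> real_of_int m" by linarith
    with R \<open>1 / real n \<le> 1 / 2\<close> \<open>1 / (real n + 1) \<le> 1 / 3\<close> show ?thesis
      unfolding R_def by linarith
  qed
qed

lemma exp_1_not_rational: "(exp 1 :: real) \<notin> \<rat>"
proof
  assume "(exp 1 :: real) \<in> \<rat>"
  then obtain a b :: int where "0 < b" and e: "exp 1 = (of_int a / of_int b :: real)"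
    by (rule Rats_cases') auto
  define n where "n = nat b + 1"
  have "nat b dvd fact n" using \<open>0 < b\<close> by (intro dvd_fact) (auto simp: n_def)
  then obtain c where "fact n = nat b * c" by blast
  then have "(fact n :: real) = of_nat (nat b * c)"
    by (metis of_nat_fact)
  also have "\<dots> = of_int b * of_nat c" using \<open>0 < b\<close> by simp
  finally have "(fact n :: real) = of_int b * of_nat c" .
  then have "fact n * exp 1 = (of_int (int c * a) :: real)"
    using \<open>0 < b\<close> by (simp add: e)
  moreover have "1 / (real n + 1) < \<bar>fact n * exp 1 - of_int (int c * a)\<bar>"
    using \<open>0 < b\<close> by (intro fact_mult_exp_1_dist_int) (simp add: n_def)
  ultimately show False by simp
qed

lemma cofactor_sq_gt_of_exp_1_approx:
  fixes p d :: int and q :: nat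
  assumes "0 < q" and approx: "\<bar>q * exp 1 - p\<bar> < 1 / q"
    and "0 < n" and fact_eq: "fact n = d * int q"
  shows "fact n / real (n + 1) < real_of_int d ^ 2"
proof -
  have "0 < d"
    using fact_gt_zero[of n, where 'a = int] fact_eq \<open>0 < q\<close> by (simp add: zero_less_mult_iff)
  have fact_real: "(fact n :: real) = d * q" using arg_cong[OF fact_eq, of real_of_int] by simp
  show ?thesis
  proof (cases "n = 1")
    case True
    with fact_eq \<open>0 < d\<close> have "d = 1" by (simp add: zmult_eq_1_iff)
    with True show ?thesis by simp
  next
    case False
    with \<open>0 < n\<close> have "2 \<le> n" by simp
    have "\<bar>fact n * exp 1 - of_int (d * p)\<bar> = \<bar>d * (q * exp 1 - p)\<bar>"
      by (simp add: fact_real algebra_simps)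
    also have "\<dots> < d * (1 / q)"
      using \<open>0 < d\<close> approx by (simp add: abs_mult del: times_divide_eq_right)
    finally have "\<bar>fact n * exp 1 - of_int (d * p)\<bar> < d * (1 / q)" .
    with fact_mult_exp_1_dist_int[OF \<open>2 \<le> n\<close>, of "d * p"]
    have "1 / (real n + 1) < d / q" by simp
    then have "q < d * (real n + 1)"
      using \<open>0 < q\<close> by (simp add: field_simps)
    then have "real_of_int d * q < d * (d * (real n + 1))"
      using \<open>0 < d\<close> by (intro mult_strict_left_mono) auto
    then show ?thesis by (simp add: fact_real power2_eq_square field_simps)
  qed
qed

lemma sq_lt_fact_Suc:
  fixes c q :: nat
  assumes fact_eq: "fact n = c * q" and bound: "fact n / real (n + 1) < real c ^ 2"
  shows "q ^ 2 < fact (Suc n)"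
proof -
  have fact_real: "(fact n :: real) = c * q" using arg_cong[OF fact_eq, of real] by simp
  have "q \<noteq> 0" using fact_eq by (metis fact_nonzero mult_0_right)
  have "fact n < real c ^ 2 * (real n + 1)" using bound by (simp add: field_simps)
  then have "fact n * real q ^ 2 < real c ^ 2 * (real n + 1) * real q ^ 2"
    using \<open>q \<noteq> 0\<close> by (intro mult_strict_right_mono) auto
  also have "\<dots> = fact n * (fact n * (real n + 1))"
    by (simp add: fact_real power2_eq_square algebra_simps)
  finally have "real q ^ 2 < fact n * (real n + 1)" by simp
  then have "real (q ^ 2) < real (fact (Suc n))" by (simp add: algebra_simps)
  then show ?thesis by linarith
qed

lemma smarandache_spec:
  assumes "0 < q"
  shows "0 < smarandache q" and "q dvd fact (smarandache q)"
proof -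
  have "0 < smarandache q \<and> q dvd fact (smarandache q)"
    unfolding smarandache_def by (rule LeastI[of _ q]) (use assms in \<open>auto intro: dvd_fact\<close>)
  then show "0 < smarandache q" and "q dvd fact (smarandache q)" by auto
qed

theorem lemma2p1:
  fixes p q :: nat
  assumes "0 < p" and "0 < q" and "coprime p q"
    and "\<exists>k. real p / real q = convergent_of (exp 1) k"
  shows "(1 < q \<longrightarrow> q ^ 2 < fact (smarandache q + 1))
       \<and> (\<forall>(n::nat) (d::int). 0 < n \<longrightarrow> fact n = d * int q
            \<longrightarrow> real_of_int d ^ 2 > fact n / real (n + 1))"
proof -
  obtain k where "real p / real q = convergent_of (exp 1) k" using assms(4) by blast
  then have "\<bar>q * exp 1 - p\<bar> < 1 / q"
    using convergent_of_reduced_error[OF exp_1_not_rational, of "int q" "int p" k] assms(2,3)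
    by simp
  then have part_ii: "\<forall>(n::nat) (d::int). 0 < n \<longrightarrow> fact n = d * int q
      \<longrightarrow> real_of_int d ^ 2 > fact n / real (n + 1)"
    using cofactor_sq_gt_of_exp_1_approx[OF \<open>0 < q\<close>, of "int p"] by auto
  define S where "S = smarandache q"
  obtain c where c: "fact S = c * q"
    using smarandache_spec(2)[OF \<open>0 < q\<close>] by (metis S_def dvdE mult.commute)
  have "0 < S" using smarandache_spec(1)[OF \<open>0 < q\<close>] by (simp add: S_def)
  moreover have "(fact S :: int) = int c * int q" using arg_cong[OF c, of int] by simp
  ultimately have "fact S / real (S + 1) < real_of_int (int c) ^ 2"
    using part_ii by blast
  then have "q ^ 2 < fact (S + 1)"
    using sq_lt_fact_Suc[OF c] by simp
  with part_ii show ?thesis by (simp add: S_def)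
qed

end
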